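(* The following subgroups of $\mathrm{Homeo}(\{0,1\}^{\mathbb N})$ are all equal: $\widehat S=\langle {}_yG_y,T\rangle=\langle G_y,T\rangle=\langle {}_yG,T\rangle=\langle G,T\rangle=\langle y_{10},T\rangle$.
   Context: Let $\{0,1\}^{\mathbb N}$ be the Cantor set of infinite binary sequences and $\{0,1\}^{<\mathbb N}$ the set of finite binary words, including the empty word; juxtaposition denotes concatenation, $0^n,1^n$ ($n\ge0$) denote constant words. Homeomorphisms act on the right. Define $x,y$ by $00\eta\cdot x=0\eta$, $01\eta\cdot x=10\eta$, $1\eta\cdot x=11\eta$, and recursively $00\eta\cdot y=0(\eta\cdot y)$, $01\eta\cdot y=10(\eta\cdot y^{-1})$, $1\eta\cdot y=11(\eta\cdot y)$; $x_s$ (resp. $y_s$) sends $s\eta\mapsto s(\eta\cdot x)$ (resp. $s(\eta\cdot y)$) and fixes sequences not beginning with $s$. $F=\langle x_s\rangle$; ${}_yG_y=\langle F,\ y_s\ (\text{all } s)\rangle$; $G_y=\langle F,\ y_s\ (s\ne0^n)\rangle$; ${}_yG=\langle F,\ y_s\ (s\ne 1^n)\rangle$; $G=\langle F,\ y_s\ (s\notin\{0^n,1^n\})\rangle$. For $n\ge0$, $p_n$ is the homeomorphism with $1^k0\eta\cdot p_n=1^{k+1}0\eta$ for $0\le k\le n-1$, $1^n0\eta\cdot p_n=1^{n+1}\eta$, $1^{n+1}\eta\cdot p_n=0\eta$; $T=\langle F,p_n\ (n\ge0)\rangle$. $\widehat S$ denotes the group generated by all $x_s,y_s,p_n$. *)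

theory Defs
  imports "HOL-Library.Stream" "HOL-Library.BNF_Corec" "HOL-Algebra.Bij" "HOL-Algebra.Generated_Groups"
begin

text \<open>Cantor set: bool stream (False = 0, True = 1); finite words: bool list.
  Homeomorphisms are represented as functions; composition in BijGroup.\<close>

definition xmap :: "bool stream \<Rightarrow> bool stream" where
  "xmap s = (if shd s then True ## True ## stl s
             else if shd (stl s) then True ## False ## stl (stl s)
             else False ## stl (stl s))"

text \<open>ygen True is y, ygen False is y inverse.\<close>
corec ygen :: "bool \<Rightarrow> bool stream \<Rightarrow> bool stream" where
  "ygen b s = (if b then
      (if shd s then True ## True ## ygen True (stl s)
       else if shd (stl s) then True ## False ## ygen False (stl (stl s))
       else False ## ygen True (stl (stl s)))
    else
      (if \<not> shd s then False ## False ## ygen False (stl s)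
       else if \<not> shd (stl s) then False ## True ## ygen True (stl (stl s))
       else True ## ygen False (stl (stl s))))"

definition ymap :: "bool stream \<Rightarrow> bool stream" where
  "ymap = ygen True"

definition at_word :: "bool list \<Rightarrow> (bool stream \<Rightarrow> bool stream) \<Rightarrow> bool stream \<Rightarrow> bool stream" where
  "at_word w f s = (if stake (length w) s = w then w @- f (sdrop (length w) s) else s)"

definition x_at :: "bool list \<Rightarrow> bool stream \<Rightarrow> bool stream" where
  "x_at w = at_word w xmap"

definition y_at :: "bool list \<Rightarrow> bool stream \<Rightarrow> bool stream" where
  "y_at w = at_word w ymap"

definition pmap :: "nat \<Rightarrow> bool stream \<Rightarrow> bool stream" where
  "pmap n s = (if stake (n + 1) s = replicate (n + 1) True then False ## sdrop (n + 1) s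
     else (let k = (LEAST k. s !! k = False) in
       if k < n then replicate (k + 1) True @- False ## sdrop (k + 1) s
       else replicate (n + 1) True @- sdrop (n + 1) s))"

abbreviation BG :: "(bool stream \<Rightarrow> bool stream) monoid" where
  "BG \<equiv> BijGroup (UNIV :: bool stream set)"

definition grpF where "grpF = generate BG (range x_at)"
definition grp_yGy where "grp_yGy = generate BG (grpF \<union> range y_at)"
definition grp_Gy where
  "grp_Gy = generate BG (grpF \<union> y_at ` {w. \<forall>n. w \<noteq> replicate n False})"
definition grp_yG where
  "grp_yG = generate BG (grpF \<union> y_at ` {w. \<forall>n. w \<noteq> replicate n True})"
definition grp_G where
  "grp_G = generate BG (grpF \<union> y_at ` {w. \<forall>n. w \<noteq> replicate n False \<and> w \<noteq> replicate n True})"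
definition grpT where "grpT = generate BG (grpF \<union> range pmap)"
definition grpShat where "grpShat = generate BG (range x_at \<union> range y_at \<union> range pmap)"

end

theory Submission
  imports Defs
begin

(* If g maps every sequence s\<eta> to t\<eta>, then g conjugates y_s into y_t. The elements x and p_0 of T
   move cones in this way between any two nonempty words (00 to 0, 1 to 11, 01 to 10, 0 to 1), so the
   subgroup generated by y_10 and T contains y_s for every nonempty s, and then also y itself, by the
   identity y \<circ> y_01 = x \<circ> y_1 \<circ> y_00 of maps. Every group in the statement is therefore generated
   by a set lying between {y_10} \<union> T and this subgroup, so all of them coincide with it. *)

lemma carrier_BijGroup_UNIV: "carrier (BijGroup (UNIV :: 'a set)) = {f. bij f}"
  by (simp add: BijGroup_def Bij_def)

lemma mult_BijGroup_UNIV: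
  "bij f \<Longrightarrow> bij g \<Longrightarrow> g \<otimes>\<^bsub>BijGroup UNIV\<^esub> f = g \<circ> f"
  by (simp add: BijGroup_def Bij_def compose_def fun_eq_iff)

lemma one_BijGroup_UNIV: "\<one>\<^bsub>BijGroup UNIV\<^esub> = id"
  by (simp add: BijGroup_def fun_eq_iff)

lemma inv_BijGroup_UNIV: "bij f \<Longrightarrow> m_inv (BijGroup UNIV) f = inv_into UNIV f"
  by (simp add: inv_BijGroup Bij_def fun_eq_iff)

lemma (in group) generate_eq_generate_of_subset:
  assumes "A \<subseteq> carrier G" "A \<subseteq> S" "S \<subseteq> generate G A"
  shows "generate G S = generate G A"
  using assms generate_subgroup_incl generate_is_subgroup mono_generate by (metis subset_antisym)

interpretation BG: group BG
  by (rule group_BijGroup)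

lemma stream_eq_snthI: "(\<And>n. s !! n = t !! n) \<Longrightarrow> s = t"
  using smap_alt[of id s t] by (simp add: stream.map_id)

lemma ygen_Stream:
  "ygen True (False ## False ## s) = False ## ygen True s"
  "ygen True (False ## True ## s) = True ## False ## ygen False s"
  "ygen True (True ## s) = True ## True ## ygen True s"
  "ygen False (True ## True ## s) = True ## ygen False s"
  "ygen False (True ## False ## s) = False ## True ## ygen True s"
  "ygen False (False ## s) = False ## False ## ygen False s"
  by (subst ygen.code; simp)+

(* ygen reads and writes prefixes of different lengths, so its inverse laws are proved
   positionwise by strong induction rather than by coinduction. *)
lemma snth_ygen_inverse:
  "ygen False (ygen True s) !! n = s !! n \<and> ygen True (ygen False s) !! n = s !! n"
proof (induction n arbitrary: s rule: less_induct)
  case (less n)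
  obtain c d t where s: "s = c ## d ## t" by (metis stream.collapse)
  have IH: "ygen False (ygen True u) !! m = u !! m" "ygen True (ygen False u) !! m = u !! m"
    if "m < n" for m u using less that by blast+
  show ?case
    by (cases c; cases d; cases n; simp add: s ygen_Stream IH;
        (rename_tac m, case_tac m; simp add: IH)?)
qed

lemma ygen_inverse:
  "ygen False (ygen True s) = s" "ygen True (ygen False s) = s"
  by (auto intro: stream_eq_snthI simp: snth_ygen_inverse)

lemma bij_ymap: "bij ymap"
  by (rule o_bij[of "ygen False"]) (simp_all add: fun_eq_iff ymap_def ygen_inverse)

definition xmap_inv :: "bool stream \<Rightarrow> bool stream" where
  "xmap_inv s = (if \<not> shd s then False ## False ## stl s
                 else if shd (stl s) then True ## stl (stl s)
                 else False ## True ## stl (stl s))"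

lemma bij_xmap: "bij xmap"
proof (rule o_bij[of xmap_inv])
  have "xmap_inv (xmap s) = s \<and> xmap (xmap_inv s) = s" for s
  proof -
    obtain c d t where "s = c ## d ## t" by (metis stream.collapse)
    then show ?thesis by (cases c; cases d; simp add: xmap_def xmap_inv_def)
  qed
  then show "xmap_inv \<circ> xmap = id" "xmap \<circ> xmap_inv = id" by auto
qed

lemma at_word_inverse: "(\<And>x. g (f x) = x) \<Longrightarrow> at_word w g (at_word w f s) = s"
  by (cases "stake (length w) s = w")
     (simp_all add: at_word_def stake_shift sdrop_shift, metis stake_sdrop)

lemma bij_at_word: "bij f \<Longrightarrow> bij (at_word w f)"
  by (rule o_bij[of "at_word w (inv_into UNIV f)"])
     (simp_all add: fun_eq_iff at_word_inverse bij_is_inj bij_is_surj surj_f_inv_f)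

lemma stream_replicate_True_cases:
  obtains \<eta> where "s = replicate (Suc n) True @- \<eta>"
  | k \<eta> where "k \<le> n" "s = replicate k True @- False ## \<eta>"
proof (induction n arbitrary: s thesis)
  case 0
  obtain c t where s: "s = c ## t" by (metis stream.collapse)
  then show ?case using 0 by (cases c) auto
next
  case (Suc n)
  obtain c t where s: "s = c ## t" by (metis stream.collapse)
  show ?case
  proof (cases c)
    case True
    show ?thesis
    proof (rule Suc.IH[of t])
      show "thesis" if "t = replicate (Suc n) True @- \<eta>" for \<eta>
        using Suc.prems(1)[of \<eta>] that True s by simp
      show "thesis" if "k \<le> n" "t = replicate k True @- False ## \<eta>" for k \<eta>
        using Suc.prems(2)[of "Suc k" \<eta>] that True s by simp
    qed
  next
    case False
    then show ?thesis using Suc.prems(2)[of 0 t] s by simp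
  qed
qed

lemma stake_replicate_True_False:
  assumes "k < m" shows "stake m (replicate k True @- False ## \<eta>) \<noteq> replicate m True"
proof
  assume "stake m (replicate k True @- False ## \<eta>) = replicate m True"
  then have "stake m (replicate k True @- False ## \<eta>) ! k = replicate m True ! k" by simp
  with \<open>k < m\<close> show False by (simp add: shift_snth)
qed

lemma Least_snth_replicate_True_False:
  "(LEAST j. (replicate k True @- False ## \<eta>) !! j = False) = k"
  by (rule Least_equality) (auto simp: shift_snth split: if_splits)

lemma pmap_replicate_Suc: "pmap n (replicate (Suc n) True @- \<eta>) = False ## \<eta>"
  by (simp add: pmap_def stake_shift sdrop_shift del: replicate_Suc)

lemma pmap_replicate_less:
  assumes "k < n"
  shows "pmap n (replicate k True @- False ## \<eta>) = replicate (Suc k) True @- False ## \<eta>"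
proof -
  have "stake (n + 1) (replicate k True @- False ## \<eta>) \<noteq> replicate (n + 1) True"
    using assms by (intro stake_replicate_True_False) simp
  then show ?thesis
    using assms unfolding pmap_def Let_def Least_snth_replicate_True_False
    by (simp add: sdrop_shift)
qed

lemma pmap_replicate_eq: "pmap n (replicate n True @- False ## \<eta>) = replicate (Suc n) True @- \<eta>"
proof -
  have "stake (n + 1) (replicate n True @- False ## \<eta>) \<noteq> replicate (n + 1) True"
    by (intro stake_replicate_True_False) simp
  then show ?thesis
    unfolding pmap_def Let_def Least_snth_replicate_True_False
    by (simp add: sdrop_shift)
qed

definition pmap_inv :: "nat \<Rightarrow> bool stream \<Rightarrow> bool stream" where
  "pmap_inv n s = (if \<not> shd s then replicate (Suc n) True @- stl s
     else if stake n (stl s) = replicate n True then replicate n True @- False ## sdrop n (stl s)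
     else stl s)"

lemma pmap_inv_False: "pmap_inv n (False ## \<eta>) = replicate (Suc n) True @- \<eta>"
  by (simp add: pmap_inv_def)

lemma pmap_inv_replicate_less:
  "k < n \<Longrightarrow> pmap_inv n (replicate (Suc k) True @- False ## \<eta>) = replicate k True @- False ## \<eta>"
  by (simp add: pmap_inv_def stake_replicate_True_False)

lemma pmap_inv_replicate_Suc:
  "pmap_inv n (replicate (Suc n) True @- \<eta>) = replicate n True @- False ## \<eta>"
  by (simp add: pmap_inv_def stake_shift sdrop_shift)

lemma pmap_inv_pmap: "pmap_inv n (pmap n s) = s"
proof (cases s n rule: stream_replicate_True_cases)
  case (2 k \<eta>)
  then show ?thesis
    by (cases "k < n") (simp_all add: pmap_replicate_less pmap_inv_replicate_less
        pmap_replicate_eq pmap_inv_replicate_Suc del: replicate_Suc)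
qed (simp add: pmap_replicate_Suc pmap_inv_False del: replicate_Suc)

lemma pmap_pmap_inv: "pmap n (pmap_inv n s) = s"
proof (cases s n rule: stream_replicate_True_cases)
  case (2 k \<eta>)
  then show ?thesis
    by (cases k) (simp_all add: pmap_replicate_Suc pmap_inv_False pmap_inv_replicate_less
        pmap_replicate_less del: replicate_Suc)
qed (simp add: pmap_inv_replicate_Suc pmap_replicate_eq del: replicate_Suc)

lemma bij_pmap: "bij (pmap n)"
  by (rule o_bij[of "pmap_inv n"]) (simp_all add: fun_eq_iff pmap_inv_pmap pmap_pmap_inv)

lemma bij_x_at: "bij (x_at w)"
  by (simp add: x_at_def bij_at_word bij_xmap)

lemma bij_y_at: "bij (y_at w)"
  by (simp add: y_at_def bij_at_word bij_ymap)

lemma at_word_conj: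
  assumes "inj g" and g: "\<And>\<eta>. g (s @- \<eta>) = t @- \<eta>"
  shows "at_word t f (g z) = g (at_word s f z)"
proof (cases "stake (length s) z = s")
  case True
  define \<eta> where "\<eta> = sdrop (length s) z"
  have z: "z = s @- \<eta>" using True unfolding \<eta>_def by (metis stake_sdrop)
  show ?thesis by (simp add: z g at_word_def stake_shift sdrop_shift)
next
  case False
  have "stake (length t) (g z) \<noteq> t"
  proof
    assume "stake (length t) (g z) = t"
    then have "g z = t @- sdrop (length t) (g z)" by (metis stake_sdrop)
    also have "\<dots> = g (s @- sdrop (length t) (g z))" by (simp add: g)
    finally have "z = s @- sdrop (length t) (g z)" using \<open>inj g\<close> by (simp add: inj_eq)
    then have "stake (length s) z = stake (length s) (s @- sdrop (length t) (g z))" by (rule arg_cong)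
    with False show False by (simp add: stake_shift)
  qed
  with False show ?thesis by (simp add: at_word_def)
qed

lemma y_at_Nil_comp_y_at_01:
  "y_at [] \<circ> y_at [False, True] = x_at [] \<circ> y_at [True] \<circ> y_at [False, False]"
proof
  fix z :: "bool stream"
  obtain c d u where "z = c ## d ## u" by (metis stream.collapse)
  then show "(y_at [] \<circ> y_at [False, True]) z = (x_at [] \<circ> y_at [True] \<circ> y_at [False, False]) z"
    by (cases c; cases d; simp add: y_at_def x_at_def at_word_def ymap_def ygen_Stream xmap_def
        ygen_inverse)
qed

definition moves_cone :: "('a stream \<Rightarrow> 'a stream) set \<Rightarrow> 'a list \<Rightarrow> 'a list \<Rightarrow> bool" where
  "moves_cone H s t \<longleftrightarrow> (\<exists>g\<in>H. \<forall>\<eta>. g (s @- \<eta>) = t @- \<eta>)"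

lemma moves_cone_append: "moves_cone H s t \<Longrightarrow> moves_cone H (s @ w) (t @ w)"
  by (auto simp: moves_cone_def)

context
  fixes H :: "(bool stream \<Rightarrow> bool stream) set"
  assumes subgroup_H: "subgroup H BG"
begin

lemma bij_if_mem: "g \<in> H \<Longrightarrow> bij g"
  using subgroup.subset[OF subgroup_H] by (auto simp: carrier_BijGroup_UNIV)

lemma moves_cone_refl: "moves_cone H s s"
  using subgroup.one_closed[OF subgroup_H] unfolding moves_cone_def one_BijGroup_UNIV
  by (intro bexI[of _ id]) auto

lemma moves_cone_trans: "moves_cone H s t \<Longrightarrow> moves_cone H t u \<Longrightarrow> moves_cone H s u"
proof (unfold moves_cone_def, elim bexE)
  fix g h
  assume g: "g \<in> H" "\<forall>\<eta>. g (s @- \<eta>) = t @- \<eta>" and h: "h \<in> H" "\<forall>\<eta>. h (t @- \<eta>) = u @- \<eta>"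
  have "h \<otimes>\<^bsub>BG\<^esub> g \<in> H" using g h subgroup.m_closed[OF subgroup_H] by auto
  moreover have "h \<otimes>\<^bsub>BG\<^esub> g = h \<circ> g" using g h by (simp add: mult_BijGroup_UNIV bij_if_mem)
  ultimately show "\<exists>k\<in>H. \<forall>\<eta>. k (s @- \<eta>) = u @- \<eta>" using g h by (metis comp_apply)
qed

lemma moves_cone_sym: "moves_cone H s t \<Longrightarrow> moves_cone H t s"
proof (unfold moves_cone_def, elim bexE)
  fix g assume g: "g \<in> H" "\<forall>\<eta>. g (s @- \<eta>) = t @- \<eta>"
  have "inv\<^bsub>BG\<^esub> g \<in> H" using g subgroup.m_inv_closed[OF subgroup_H] by auto
  moreover have "inv\<^bsub>BG\<^esub> g = inv_into UNIV g" using g by (simp add: inv_BijGroup_UNIV bij_if_mem)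
  moreover have "inv_into UNIV g (t @- \<eta>) = s @- \<eta>" for \<eta>
    using g bij_if_mem[OF g(1)] by (metis bij_is_inj inv_f_f)
  ultimately show "\<exists>k\<in>H. \<forall>\<eta>. k (t @- \<eta>) = s @- \<eta>" by auto
qed

lemma at_word_mem_if_moves_cone:
  assumes "moves_cone H s t" "bij f" "at_word t f \<in> H"
  shows "at_word s f \<in> H"
proof -
  obtain g where g: "g \<in> H" "\<And>\<eta>. g (s @- \<eta>) = t @- \<eta>"
    using assms(1) by (auto simp: moves_cone_def)
  have carrier: "g \<in> carrier BG" "at_word s f \<in> carrier BG" "at_word t f \<in> carrier BG"
    using bij_if_mem[OF g(1)] bij_at_word[OF assms(2)] by (auto simp: carrier_BijGroup_UNIV)
  have "g \<otimes>\<^bsub>BG\<^esub> at_word s f = at_word t f \<otimes>\<^bsub>BG\<^esub> g"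
    using carrier at_word_conj[OF bij_is_inj g(2)] bij_if_mem[OF g(1)]
    by (simp add: mult_BijGroup_UNIV carrier_BijGroup_UNIV fun_eq_iff)
  then have "at_word s f = inv\<^bsub>BG\<^esub> g \<otimes>\<^bsub>BG\<^esub> (at_word t f \<otimes>\<^bsub>BG\<^esub> g)"
    using carrier by (simp add: BG.inv_solve_left)
  then show ?thesis
    using g(1) assms(3) subgroup.m_closed[OF subgroup_H] subgroup.m_inv_closed[OF subgroup_H]
    by simp
qed

context
  assumes x_mem: "x_at [] \<in> H" and p_mem: "pmap 0 \<in> H"
begin

lemma moves_cone_False_True: "moves_cone H [False] [True]"
  unfolding moves_cone_def
  using p_mem pmap_replicate_eq[of 0] by (intro bexI[of _ "pmap 0"]) auto

lemma moves_cone_by_x: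
  "moves_cone H [False, False] [False]" "moves_cone H [True] [True, True]"
  "moves_cone H [False, True] [True, False]"
  unfolding moves_cone_def using x_mem
  by (auto simp: x_at_def at_word_def xmap_def intro!: bexI[of _ "x_at []"])

lemma moves_cone_Cons_False: "moves_cone H (a # w) [False]"
proof (induction w arbitrary: a)
  case Nil
  then show ?case
    using moves_cone_refl moves_cone_sym[OF moves_cone_False_True] by (cases a) auto
next
  case (Cons b v)
  have FT_TT: "moves_cone H (False # True # v) (True # True # v)"
    using moves_cone_append[OF moves_cone_False_True, of "True # v"] by simp
  have TT: "moves_cone H (True # True # v) (True # v)"
    using moves_cone_sym[OF moves_cone_append[OF moves_cone_by_x(2), of v]] by simp
  have FT: "moves_cone H (False # True # v) (True # v)"
    using moves_cone_trans[OF FT_TT TT] .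
  have TF: "moves_cone H (True # False # v) (False # True # v)"
    using moves_cone_sym[OF moves_cone_append[OF moves_cone_by_x(3), of v]] by simp
  have FF: "moves_cone H (False # False # v) (False # v)"
    using moves_cone_append[OF moves_cone_by_x(1), of v] by simp
  show ?case
  proof (cases a; cases b)
    assume a b
    then show ?case using moves_cone_trans[OF TT Cons.IH] by simp
  next
    assume a "\<not> b"
    then show ?case using moves_cone_trans[OF moves_cone_trans[OF TF FT] Cons.IH] by simp
  next
    assume "\<not> a" b
    then show ?case using moves_cone_trans[OF FT Cons.IH] by simp
  next
    assume "\<not> a" "\<not> b"
    then show ?case using moves_cone_trans[OF FF Cons.IH] by simp
  qed
qed

lemma y_at_mem:
  assumes y_mem: "y_at [True, False] \<in> H"
  shows "y_at w \<in> H"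
proof -
  have y_Cons: "y_at (a # v) \<in> H" for a v
    using at_word_mem_if_moves_cone[OF moves_cone_trans[OF moves_cone_Cons_False
          moves_cone_sym[OF moves_cone_Cons_False]] bij_ymap] y_mem by (simp add: y_at_def)
  have carrier: "y_at v \<in> carrier BG" "x_at v \<in> carrier BG" for v
    by (simp_all add: carrier_BijGroup_UNIV bij_y_at bij_x_at)
  have "y_at [] \<otimes>\<^bsub>BG\<^esub> y_at [False, True]
      = x_at [] \<otimes>\<^bsub>BG\<^esub> y_at [True] \<otimes>\<^bsub>BG\<^esub> y_at [False, False]"
    using y_at_Nil_comp_y_at_01 by (simp add: mult_BijGroup_UNIV bij_y_at bij_x_at bij_comp)
  then have "y_at [] = x_at [] \<otimes>\<^bsub>BG\<^esub> y_at [True] \<otimes>\<^bsub>BG\<^esub> y_at [False, False]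
      \<otimes>\<^bsub>BG\<^esub> inv\<^bsub>BG\<^esub> y_at [False, True]"
    using carrier by (simp add: BG.inv_solve_right)
  then have y_Nil: "y_at [] \<in> H"
    using x_mem y_Cons subgroup.m_closed[OF subgroup_H] subgroup.m_inv_closed[OF subgroup_H]
    by simp
  show ?thesis
    using y_Cons y_Nil by (cases w) auto
qed

end

end

definition grp_y10T :: "(bool stream \<Rightarrow> bool stream) set" where
  "grp_y10T = generate BG ({y_at [True, False]} \<union> range x_at \<union> range pmap)"

lemma y10T_gens_subset_carrier: "{y_at [True, False]} \<union> range x_at \<union> range pmap \<subseteq> carrier BG"
  by (auto simp: carrier_BijGroup_UNIV bij_x_at bij_y_at bij_pmap)

lemma subgroup_grp_y10T: "subgroup grp_y10T BG"
  unfolding grp_y10T_def by (rule BG.generate_is_subgroup[OF y10T_gens_subset_carrier])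

lemma y10T_gens_subset_grp_y10T: "{y_at [True, False]} \<union> range x_at \<union> range pmap \<subseteq> grp_y10T"
  unfolding grp_y10T_def by (auto intro: generate.incl)

lemma y_at_in_grp_y10T: "y_at w \<in> grp_y10T"
proof (rule y_at_mem[OF subgroup_grp_y10T])
  show "x_at [] \<in> grp_y10T" "pmap 0 \<in> grp_y10T" "y_at [True, False] \<in> grp_y10T"
    using y10T_gens_subset_grp_y10T by auto
qed

lemma grpT_subset_grp_y10T: "grpT \<subseteq> grp_y10T"
proof -
  have "grpF \<subseteq> grp_y10T"
    unfolding grpF_def using y10T_gens_subset_grp_y10T
    by (intro BG.generate_subgroup_incl[OF _ subgroup_grp_y10T]) auto
  then show ?thesis
    unfolding grpT_def using y10T_gens_subset_grp_y10T
    by (intro BG.generate_subgroup_incl[OF _ subgroup_grp_y10T]) auto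
qed

lemma range_x_at_pmap_subset_grpT: "range x_at \<union> range pmap \<subseteq> grpT"
  unfolding grpT_def grpF_def by (auto intro: generate.incl)

lemma generate_eq_grp_y10T:
  assumes "{y_at [True, False]} \<union> range x_at \<union> range pmap \<subseteq> S" "S \<subseteq> grp_y10T"
  shows "generate BG S = grp_y10T"
  using assms unfolding grp_y10T_def
  by (rule BG.generate_eq_generate_of_subset[OF y10T_gens_subset_carrier])

lemma generate_grpF_Un_grpT:
  assumes "y_at [True, False] \<in> Y" "Y \<subseteq> range y_at"
  shows "generate BG (generate BG (grpF \<union> Y) \<union> grpT) = grp_y10T"
proof (rule generate_eq_grp_y10T)
  show "{y_at [True, False]} \<union> range x_at \<union> range pmap \<subseteq> generate BG (grpF \<union> Y) \<union> grpT"
    using assms range_x_at_pmap_subset_grpT by (auto intro: generate.incl)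
  have "grpF \<subseteq> grpT"
    unfolding grpT_def by (auto intro: generate.incl)
  then have "grpF \<union> Y \<subseteq> grp_y10T"
    using assms(2) grpT_subset_grp_y10T y_at_in_grp_y10T by auto
  then have "generate BG (grpF \<union> Y) \<subseteq> grp_y10T"
    by (rule BG.generate_subgroup_incl[OF _ subgroup_grp_y10T])
  then show "generate BG (grpF \<union> Y) \<union> grpT \<subseteq> grp_y10T"
    using grpT_subset_grp_y10T by simp
qed

theorem lemma6p1:
  shows "grpShat = generate BG (grp_yGy \<union> grpT)
    \<and> generate BG (grp_yGy \<union> grpT) = generate BG (grp_Gy \<union> grpT)
    \<and> generate BG (grp_Gy \<union> grpT) = generate BG (grp_yG \<union> grpT)
    \<and> generate BG (grp_yG \<union> grpT) = generate BG (grp_G \<union> grpT)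
    \<and> generate BG (grp_G \<union> grpT) = generate BG ({y_at [True, False]} \<union> grpT)"
proof -
  have "[True, False] \<noteq> replicate n b" for n b
    by (simp add: Cons_replicate_eq)
  then have "generate BG (grp_yGy \<union> grpT) = grp_y10T" "generate BG (grp_Gy \<union> grpT) = grp_y10T"
    "generate BG (grp_yG \<union> grpT) = grp_y10T" "generate BG (grp_G \<union> grpT) = grp_y10T"
    unfolding grp_yGy_def grp_Gy_def grp_yG_def grp_G_def by (auto intro!: generate_grpF_Un_grpT)
  moreover have "grpShat = grp_y10T"
    unfolding grpShat_def using y10T_gens_subset_grp_y10T y_at_in_grp_y10T
    by (intro generate_eq_grp_y10T) auto
  moreover have "generate BG ({y_at [True, False]} \<union> grpT) = grp_y10T"
    using range_x_at_pmap_subset_grpT grpT_subset_grp_y10T y_at_in_grp_y10T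
    by (intro generate_eq_grp_y10T) auto
  ultimately show ?thesis by simp
qed

end
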